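(* Assume the pair $(\mathcal D,\mathcal F)$ is good. Then: (i) for every $\delta\in(0,1)$, $\mathrm{Risk}_*(\delta^2/4)\ge\Phi_*(\ln(1/\delta))$; (ii) for every $\varepsilon\in(0,1/4)$, $\mathrm{Risk}_*(\varepsilon)\ge\dfrac{\ln(1/(4\varepsilon))}{2\ln(2/\varepsilon)}\,\Phi_*(\ln(2/\varepsilon))$.
   Context: Let $(\Omega,P)$ be a Polish space equipped with a $\sigma$-finite Borel measure $P$, let $\mathcal M\subset\mathbb R^m$, and let $\mathcal D=\{p_\mu\}_{\mu\in\mathcal M}$ be a parametric density family: for each $\mu\in\mathcal M$, $p_\mu$ is a nonnegative Borel function on $\Omega$ with $\int_\Omega p_\mu\,dP=1$. Let $\mathcal F$ be a finite-dimensional linear space of Borel functions on $\Omega$ containing the constants. The pair $(\mathcal D,\mathcal F)$ is called good if: (1) $\mathcal M$ is an open convex subset of $\mathbb R^m$; (2) $p_\mu(\omega)>0$ for all $\mu\in\mathcal M$, $\omega\in\Omega$; (3) for all $\mu,\nu\in\mathcal M$ the function $\omega\mapsto\ln(p_\mu(\omega)/p_\nu(\omega))$ belongs to $\mathcal F$; (4) for every $\phi\in\mathcal F$ the function $\mu\mapsto\ln\int_\Omega e^{\phi(\omega)}p_\mu(\omega)P(d\omega)$ is well defined (finite) and concave on $\mathcal M$. Let $X\subset\mathbb R^n$ be a nonempty convex compact set, $x\mapsto A(x)$ an affine map $\mathbb R^n\to\mathbb R^m$ with $A(X)\subset\mathcal M$, and $g\in\mathbb R^n$. An observation $\omega$ has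 density $p_{A(x)}$ w.r.t. $P$ for an unknown $x\in X$; the goal is to estimate $g^Tx$. An estimate is a Borel function $\hat g:\Omega\to\mathbb R$. For $\varepsilon\in(0,1)$ the $\varepsilon$-risk of $\hat g$ is $\mathrm{Risk}(\hat g;\varepsilon)=\inf\{\delta:\ \sup_{x\in X}\mathrm{Prob}_{\omega\sim p_{A(x)}}\{|\hat g(\omega)-g^Tx|>\delta\}<\varepsilon\}$; $\mathrm{Risk}_*(\varepsilon)=\inf_{\hat g}\mathrm{Risk}(\hat g;\varepsilon)$, the infimum over all Borel estimates. For $r\ge0$, $x,y\in X$, $\phi\in\mathcal F$, $\alpha>0$ define $$\Phi_r(x,y;\phi,\alpha)=g^Tx-g^Ty+\alpha\ln\int_\Omega e^{\phi(\omega)/\alpha}p_{A(y)}(\omega)P(d\omega)+\alpha\ln\int_\Omega e^{-\phi(\omega)/\alpha}p_{A(x)}(\omega)P(d\omega)+2\alpha r,$$ and $\Phi_*(r)=\tfrac12\inf_{\phi\in\mathcal F,\alpha>0}\sup_{x,y\in X}\Phi_r(x,y;\phi,\alpha)$. *)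

theory Defs
  imports "HOL-Analysis.Analysis"
begin

definition fin_dim_fun_space :: "('w \<Rightarrow> real) set \<Rightarrow> bool" where
  "fin_dim_fun_space F \<longleftrightarrow>
     (\<exists>B :: ('w \<Rightarrow> real) list.
        F = {(\<lambda>\<omega>. \<Sum>i<length B. c i * (B ! i) \<omega>) | c :: nat \<Rightarrow> real. True})"

text \<open>The pair (D,F) is good. P is the reference measure on Omega, p mu is the density
  indexed by the parameter mu in the parameter set M.\<close>
definition good_pair ::
  "'w::polish_space measure \<Rightarrow> ('m::euclidean_space) set \<Rightarrow> ('m \<Rightarrow> 'w \<Rightarrow> real)
     \<Rightarrow> ('w \<Rightarrow> real) set \<Rightarrow> bool" where
  "good_pair P M p F \<longleftrightarrow>
     \<comment> \<open>standing assumptions\<close>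
     sets P = sets borel \<and> sigma_finite_measure P \<and>
     (\<forall>\<mu>\<in>M. p \<mu> \<in> borel_measurable P \<and> (\<forall>\<omega>. 0 \<le> p \<mu> \<omega>) \<and>
              (\<integral>\<^sup>+ \<omega>. ennreal (p \<mu> \<omega>) \<partial>P) = 1) \<and>
     fin_dim_fun_space F \<and> (\<forall>\<phi>\<in>F. \<phi> \<in> borel_measurable P) \<and> (\<forall>c. (\<lambda>_. c) \<in> F) \<and>
     \<comment> \<open>(1)\<close>
     open M \<and> convex M \<and>
     \<comment> \<open>(2)\<close>
     (\<forall>\<mu>\<in>M. \<forall>\<omega>. 0 < p \<mu> \<omega>) \<and>
     \<comment> \<open>(3)\<close>
     (\<forall>\<mu>\<in>M. \<forall>\<nu>\<in>M. (\<lambda>\<omega>. ln (p \<mu> \<omega> / p \<nu> \<omega>)) \<in> F) \<and>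
     \<comment> \<open>(4)\<close>
     (\<forall>\<phi>\<in>F. (\<forall>\<mu>\<in>M. integrable P (\<lambda>\<omega>. exp (\<phi> \<omega>) * p \<mu> \<omega>)) \<and>
              concave_on M (\<lambda>\<mu>. ln (\<integral>\<omega>. exp (\<phi> \<omega>) * p \<mu> \<omega> \<partial>P)))"

definition miss_prob ::
  "'w measure \<Rightarrow> ('m \<Rightarrow> 'w \<Rightarrow> real) \<Rightarrow> ('n \<Rightarrow> 'm) \<Rightarrow> ('n::real_inner)
     \<Rightarrow> ('w \<Rightarrow> real) \<Rightarrow> 'n \<Rightarrow> real \<Rightarrow> real" where
  "miss_prob P p A g ghat x \<delta> =
     measure (density P (\<lambda>\<omega>. ennreal (p (A x) \<omega>)))
             {\<omega> \<in> space P. \<bar>ghat \<omega> - g \<bullet> x\<bar> > \<delta>}"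

text \<open>epsilon-risk of an estimate (value +infinity if no delta works).\<close>
definition risk ::
  "'w measure \<Rightarrow> ('m \<Rightarrow> 'w \<Rightarrow> real) \<Rightarrow> ('n \<Rightarrow> 'm) \<Rightarrow> 'n set \<Rightarrow> ('n::real_inner)
     \<Rightarrow> ('w \<Rightarrow> real) \<Rightarrow> real \<Rightarrow> ereal" where
  "risk P p A X g ghat \<epsilon> =
     Inf {ereal \<delta> | \<delta>. (SUP x\<in>X. ereal (miss_prob P p A g ghat x \<delta>)) < ereal \<epsilon>}"

definition risk_star ::
  "'w measure \<Rightarrow> ('m \<Rightarrow> 'w \<Rightarrow> real) \<Rightarrow> ('n \<Rightarrow> 'm) \<Rightarrow> 'n set \<Rightarrow> ('n::real_inner)
     \<Rightarrow> real \<Rightarrow> ereal" where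
  "risk_star P p A X g \<epsilon> = (INF ghat\<in>borel_measurable P. risk P p A X g ghat \<epsilon>)"

definition Phi_r ::
  "'w measure \<Rightarrow> ('m \<Rightarrow> 'w \<Rightarrow> real) \<Rightarrow> ('n \<Rightarrow> 'm) \<Rightarrow> ('n::real_inner) \<Rightarrow> real
     \<Rightarrow> 'n \<Rightarrow> 'n \<Rightarrow> ('w \<Rightarrow> real) \<Rightarrow> real \<Rightarrow> real" where
  "Phi_r P p A g r x y \<phi> \<alpha> =
     g \<bullet> x - g \<bullet> y
     + \<alpha> * ln (\<integral>\<omega>. exp (\<phi> \<omega> / \<alpha>) * p (A y) \<omega> \<partial>P)
     + \<alpha> * ln (\<integral>\<omega>. exp (- \<phi> \<omega> / \<alpha>) * p (A x) \<omega> \<partial>P)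
     + 2 * \<alpha> * r"

definition Phi_star ::
  "'w measure \<Rightarrow> ('m \<Rightarrow> 'w \<Rightarrow> real) \<Rightarrow> ('n \<Rightarrow> 'm) \<Rightarrow> 'n set \<Rightarrow> ('w \<Rightarrow> real) set
     \<Rightarrow> ('n::real_inner) \<Rightarrow> real \<Rightarrow> ereal" where
  "Phi_star P p A X F g r =
     ereal (1/2) * (INF \<phi>\<alpha>\<in>F \<times> {0<..}.
        (SUP xy\<in>X \<times> X. ereal (Phi_r P p A g r (fst xy) (snd xy) (fst \<phi>\<alpha>) (snd \<phi>\<alpha>))))"

end

theory Submission
  imports Defs
begin

text \<open>
  Fix an estimate ghat whose (delta^2/4)-risk is below delta0, and r \<ge> ln (1/delta);
  put l = ln (1/delta) / r \<in> (0, 1]. The proof has three steps.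
  (a) Testing: if g x - g y > 2 delta0, the events where ghat misses g x resp. g y cover the
      observation space, so they form a test between A x and A y with both errors below
      delta^2/4; hence the Hellinger affinity of p (A x) and p (A y) is below delta. As the
      log-affinity is concave along segments, l (g x - g y) \<le> 2 delta0 whenever the
      affinity of A x and A y is at least exp (- r).
  (b) Pointwise: at phi = alpha h, with h the half log-likelihood ratio, Phi_r equals
      g x - g y + 2 alpha (ln affinity + r), so for every pair (x, y) some parameter
      (phi, alpha) brings Phi_r below any level c > 2 delta0 / l.
  (c) Minimax: Phi_r is continuous and concave in (x, y) and convex in (phi, alpha), so a
      minimax lemma yields a single parameter that works for all pairs: Phi_star r \<le> delta0 / l.
  Parts (i) and (ii) follow with r = ln (1/delta), resp. delta = 2 sqrt eps, r = ln (2/eps).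
\<close>

lemma nonpos_of_bounded_below_on_ray:
  fixes a u v b :: real
  assumes bound: "\<And>K. 0 \<le> K \<Longrightarrow> a * (u - K) + v > b"
  shows "a \<le> 0"
proof (rule ccontr)
  assume "\<not> a \<le> 0"
  then have a: "a > 0" by simp
  define K where "K = (a * u + v - b) / a"
  have "0 \<le> K" using bound[of 0] a by (simp add: K_def)
  moreover have "a * (u - K) + v = b" using a by (simp add: K_def field_simps)
  ultimately show False using bound[of K] by simp
qed

lemma convex_downward_closed_separation:
  fixes S :: "(real \<times> real) set"
  assumes convex: "convex S"
    and down: "\<And>z w. z \<in> S \<Longrightarrow> fst w \<le> fst z \<Longrightarrow> snd w \<le> snd z \<Longrightarrow> w \<in> S"
    and outside: "(c, c) \<notin> closure S"
  shows "\<exists>t. 0 \<le> t \<and> t \<le> 1 \<and> (\<forall>z\<in>S. (1 - t) * fst z + t * snd z < c)"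
proof (cases "S = {}")
  case True
  then show ?thesis by (intro exI[of _ 0]) auto
next
  case False
  then obtain z0 where z0: "z0 \<in> S" by blast
  obtain a b where ab: "inner a (c, c) < b" and abS: "\<forall>z\<in>closure S. inner a z > b"
    using separating_hyperplane_closed_point[OF convex_closure[OF convex] closed_closure outside]
    by blast
  obtain a1 a2 where a: "a = (a1, a2)" by (cases a)
  have sep: "a1 * fst z + a2 * snd z > b" if "z \<in> S" for z
  proof -
    have "inner a z > b" using abS closure_subset that by blast
    then show ?thesis by (cases z) (simp add: a inner_Pair)
  qed
  have a1: "a1 \<le> 0"
  proof (rule nonpos_of_bounded_below_on_ray[where u = "fst z0" and v = "a2 * snd z0"])
    fix K :: real assume "0 \<le> K"
    then have "(fst z0 - K, snd z0) \<in> S" using down[OF z0] by simp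
    then show "a1 * (fst z0 - K) + a2 * snd z0 > b" using sep by fastforce
  qed
  have a2: "a2 \<le> 0"
  proof (rule nonpos_of_bounded_below_on_ray[where u = "snd z0" and v = "a1 * fst z0"])
    fix K :: real assume "0 \<le> K"
    then have "(fst z0, snd z0 - K) \<in> S" using down[OF z0] by simp
    then show "a2 * (snd z0 - K) + a1 * fst z0 > b" using sep by fastforce
  qed
  have below: "a1 * c + a2 * c < b" using ab by (simp add: a inner_Pair)
  define s where "s = - a1 - a2"
  have s: "s > 0" using a1 a2 below sep[OF z0] by (cases "a1 = 0 \<and> a2 = 0") (auto simp: s_def)
  define t where "t = - a2 / s"
  have one_minus_t: "1 - t = - a1 / s" using s by (simp add: t_def s_def field_simps)
  show ?thesis
  proof (intro exI[of _ t] conjI ballI)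
    show "0 \<le> t" using a2 s by (simp add: t_def divide_nonpos_pos)
    have "0 \<le> - a1 / s" using a1 s by (simp add: divide_nonpos_pos)
    then show "t \<le> 1" using one_minus_t by linarith
    fix z assume "z \<in> S"
    have "(1 - t) * fst z + t * snd z = (- a1 * fst z - a2 * snd z) / s"
      unfolding one_minus_t by (simp add: t_def diff_divide_distrib)
    also have "\<dots> < (- a1 * c - a2 * c) / s"
      using sep[OF \<open>z \<in> S\<close>] below s by (intro divide_strict_right_mono) auto
    also have "\<dots> = c" using s by (simp add: s_def field_simps)
    finally show "(1 - t) * fst z + t * snd z < c" .
  qed
qed

text \<open>Apply the previous lemma to the hypograph-like set of their value pairs.\<close>

lemma concave_pair_mixture:
  fixes g1 g2 :: "'y::real_normed_vector \<Rightarrow> real"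
  assumes Y: "compact Y" "convex Y"
    and cont: "continuous_on Y g1" "continuous_on Y g2"
    and conc: "concave_on Y g1" "concave_on Y g2"
    and below: "\<And>y. y \<in> Y \<Longrightarrow> min (g1 y) (g2 y) < c"
  shows "\<exists>t. 0 \<le> t \<and> t \<le> 1 \<and> (\<forall>y\<in>Y. (1 - t) * g1 y + t * g2 y < c)"
proof (cases "Y = {}")
  case True
  then show ?thesis by (intro exI[of _ 0]) auto
next
  case False
  have "continuous_on Y (\<lambda>y. min (g1 y) (g2 y))" using cont by (intro continuous_intros)
  then obtain y0 where y0: "y0 \<in> Y"
    and y0_max: "\<And>y. y \<in> Y \<Longrightarrow> min (g1 y) (g2 y) \<le> min (g1 y0) (g2 y0)"
    using continuous_attains_sup[OF Y(1) False] by blast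
  define m where "m = min (g1 y0) (g2 y0)"
  have "m < c" using below[OF y0] by (simp add: m_def)
  define S where "S = {z :: real \<times> real. \<exists>y\<in>Y. fst z \<le> g1 y \<and> snd z \<le> g2 y}"
  have "convex S"
  proof (rule convexI)
    fix z1 z2 :: "real \<times> real" and u v :: real
    assume "z1 \<in> S" "z2 \<in> S" and uv: "0 \<le> u" "0 \<le> v" "u + v = 1"
    then obtain y1 y2 where y: "y1 \<in> Y" "y2 \<in> Y"
      and z: "fst z1 \<le> g1 y1" "snd z1 \<le> g2 y1" "fst z2 \<le> g1 y2" "snd z2 \<le> g2 y2"
      by (auto simp: S_def)
    have "u *\<^sub>R y1 + v *\<^sub>R y2 \<in> Y" using Y(2) y uv by (simp add: convexD)
    moreover have "u * g1 y1 + v * g1 y2 \<le> g1 (u *\<^sub>R y1 + v *\<^sub>R y2)"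
      "u * g2 y1 + v * g2 y2 \<le> g2 (u *\<^sub>R y1 + v *\<^sub>R y2)"
      using conc y uv unfolding concave_on_iff by blast+
    moreover have "u * fst z1 + v * fst z2 \<le> u * g1 y1 + v * g1 y2"
      "u * snd z1 + v * snd z2 \<le> u * g2 y1 + v * g2 y2"
      using z uv by (auto intro!: add_mono mult_left_mono)
    ultimately show "u *\<^sub>R z1 + v *\<^sub>R z2 \<in> S" unfolding S_def by force
  qed
  moreover have "w \<in> S" if "z \<in> S" "fst w \<le> fst z" "snd w \<le> snd z" for z w
    using that by (force simp: S_def)
  moreover have "((m + c) / 2, (m + c) / 2) \<notin> closure S"
  proof -
    have "S \<subseteq> {z. min (fst z) (snd z) \<le> m}"
      using y0_max by (force simp: S_def m_def)
    moreover have "closed {z :: real \<times> real. min (fst z) (snd z) \<le> m}"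
      by (intro closed_Collect_le continuous_intros)
    ultimately have "closure S \<subseteq> {z. min (fst z) (snd z) \<le> m}" by (rule closure_minimal)
    then show ?thesis using \<open>m < c\<close> by auto
  qed
  ultimately obtain t where t: "0 \<le> t" "t \<le> 1"
    and sep: "\<And>z. z \<in> S \<Longrightarrow> (1 - t) * fst z + t * snd z < (m + c) / 2"
    using convex_downward_closed_separation[of S "(m + c) / 2"] by blast
  have "(1 - t) * g1 y + t * g2 y < c" if "y \<in> Y" for y
    using sep[of "(g1 y, g2 y)"] that \<open>m < c\<close> by (force simp: S_def)
  with t show ?thesis by blast
qed

lemma convex_superlevel_set:
  assumes "concave_on S h"
  shows "convex {y \<in> S. c \<le> h y}"
proof (rule convexI)
  fix y1 y2 and u v :: real
  assume y: "y1 \<in> {y \<in> S. c \<le> h y}" "y2 \<in> {y \<in> S. c \<le> h y}"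
    and uv: "0 \<le> u" "0 \<le> v" "u + v = 1"
  have "u *\<^sub>R y1 + v *\<^sub>R y2 \<in> S"
    using concave_on_imp_convex[OF assms] y uv by (simp add: convexD)
  moreover have "c \<le> h (u *\<^sub>R y1 + v *\<^sub>R y2)"
  proof -
    have "c = u * c + v * c" using uv(3) by (simp flip: distrib_right)
    also have "\<dots> \<le> u * h y1 + v * h y2" using y uv by (auto intro!: add_mono mult_left_mono)
    also have "\<dots> \<le> h (u *\<^sub>R y1 + v *\<^sub>R y2)" using assms y uv unfolding concave_on_iff by blast
    finally show ?thesis .
  qed
  ultimately show "u *\<^sub>R y1 + v *\<^sub>R y2 \<in> {y \<in> S. c \<le> h y}" by simp
qed

text \<open>Minimax for finitely many parameters, for a family of continuous concave functions
  f y that is convex-like in the parameter: induction on the finite set, removing one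
  parameter at a time with the two-function case.\<close>

lemma concave_minimax_finite_cover:
  fixes f :: "'y::real_normed_vector \<Rightarrow> 'a \<Rightarrow> real"
  assumes cont: "\<And>\<theta>. \<theta> \<in> \<Theta> \<Longrightarrow> continuous_on Y (\<lambda>y. f y \<theta>)"
    and conc: "\<And>\<theta>. \<theta> \<in> \<Theta> \<Longrightarrow> concave_on Y (\<lambda>y. f y \<theta>)"
    and mix: "\<And>a b t. a \<in> \<Theta> \<Longrightarrow> b \<in> \<Theta> \<Longrightarrow> 0 \<le> t \<Longrightarrow> t \<le> 1 \<Longrightarrow>
                \<exists>\<theta>\<in>\<Theta>. \<forall>y\<in>Y. f y \<theta> \<le> (1 - t) * f y a + t * f y b"
    and nonempty: "\<Theta> \<noteq> {}"
  shows "\<lbrakk>finite C; C \<subseteq> \<Theta>; Y' \<subseteq> Y; compact Y'; convex Y'; \<forall>y\<in>Y'. \<exists>\<theta>\<in>C. f y \<theta> < c\<rbrakk>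
    \<Longrightarrow> \<exists>\<theta>\<in>\<Theta>. \<forall>y\<in>Y'. f y \<theta> < c"
proof (induction C arbitrary: Y' rule: finite_induct)
  case empty
  then show ?case using nonempty by auto
next
  case (insert \<theta>' C)
  have \<theta>': "\<theta>' \<in> \<Theta>" using insert.prems by simp
  have cont': "continuous_on Y' (\<lambda>y. f y \<theta>)" and conc': "concave_on Y' (\<lambda>y. f y \<theta>)"
    if "\<theta> \<in> \<Theta>" for \<theta>
    using cont[OF that] conc[OF that] insert.prems(2,4)
    by (auto intro: continuous_on_subset simp: concave_on_def convex_on_subset)
  \<comment> \<open>The parameters of C cover the compact convex set where the new one fails.\<close>
  define Y'' where "Y'' = {y \<in> Y'. c \<le> f y \<theta>'}"
  have "Y'' = Y' \<inter> (\<lambda>y. f y \<theta>') -` {c..}" by (auto simp: Y''_def)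
  then have "closed Y''"
    using continuous_closed_preimage[OF cont'[OF \<theta>'] compact_imp_closed[OF insert.prems(3)]]
    by simp
  moreover have "Y' \<inter> Y'' = Y''" by (auto simp: Y''_def)
  ultimately have "compact Y''" using compact_Int_closed[OF insert.prems(3)] by metis
  moreover have "convex Y''" unfolding Y''_def by (rule convex_superlevel_set[OF conc'[OF \<theta>']])
  moreover have "\<forall>y\<in>Y''. \<exists>\<theta>\<in>C. f y \<theta> < c" using insert.prems(5) by (force simp: Y''_def)
  ultimately obtain \<theta>'' where \<theta>'': "\<theta>'' \<in> \<Theta>" and good'': "\<And>y. y \<in> Y'' \<Longrightarrow> f y \<theta>'' < c"
    using insert.IH[of Y''] insert.prems(1,2) by (auto simp: Y''_def)
  \<comment> \<open>Two parameters now cover Y', hence so does a single mixture of them.\<close>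
  have "min (f y \<theta>'') (f y \<theta>') < c" if "y \<in> Y'" for y
    using good''[of y] that by (cases "c \<le> f y \<theta>'") (auto simp: Y''_def)
  then obtain t where t: "0 \<le> t" "t \<le> 1" and mixed: "\<forall>y\<in>Y'. (1 - t) * f y \<theta>'' + t * f y \<theta>' < c"
    using concave_pair_mixture[OF insert.prems(3,4) cont'[OF \<theta>''] cont'[OF \<theta>']
        conc'[OF \<theta>''] conc'[OF \<theta>']] by blast
  obtain \<theta> where "\<theta> \<in> \<Theta>" and "\<forall>y\<in>Y. f y \<theta> \<le> (1 - t) * f y \<theta>'' + t * f y \<theta>'"
    using mix[OF \<theta>'' \<theta>' t] by blast
  then show ?case using mixed insert.prems(2) by (force intro: bexI[of _ \<theta>])
qed

text \<open>Minimax lemma: if for every point of a compact convex set some parameter brings f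
  below c, then a single parameter does so uniformly. By compactness finitely many
  parameters suffice.\<close>

lemma concave_minimax:
  fixes f :: "'y::real_normed_vector \<Rightarrow> 'a \<Rightarrow> real"
  assumes Y: "compact Y" "convex Y"
    and cont: "\<And>\<theta>. \<theta> \<in> \<Theta> \<Longrightarrow> continuous_on Y (\<lambda>y. f y \<theta>)"
    and conc: "\<And>\<theta>. \<theta> \<in> \<Theta> \<Longrightarrow> concave_on Y (\<lambda>y. f y \<theta>)"
    and mix: "\<And>a b t. a \<in> \<Theta> \<Longrightarrow> b \<in> \<Theta> \<Longrightarrow> 0 \<le> t \<Longrightarrow> t \<le> 1 \<Longrightarrow>
                \<exists>\<theta>\<in>\<Theta>. \<forall>y\<in>Y. f y \<theta> \<le> (1 - t) * f y a + t * f y b"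
    and nonempty: "\<Theta> \<noteq> {}"
    and pointwise: "\<And>y. y \<in> Y \<Longrightarrow> \<exists>\<theta>\<in>\<Theta>. f y \<theta> < c"
  shows "\<exists>\<theta>\<in>\<Theta>. \<forall>y\<in>Y. f y \<theta> < c"
proof -
  have "\<exists>U. open U \<and> U \<inter> Y = (\<lambda>y. f y \<theta>) -` {..<c} \<inter> Y" if "\<theta> \<in> \<Theta>" for \<theta>
    using cont[OF that] unfolding continuous_on_open_invariant by (simp add: open_lessThan)
  then obtain U where U: "\<And>\<theta>. \<theta> \<in> \<Theta> \<Longrightarrow> open (U \<theta>)"
    and U_Y: "\<And>\<theta>. \<theta> \<in> \<Theta> \<Longrightarrow> U \<theta> \<inter> Y = (\<lambda>y. f y \<theta>) -` {..<c} \<inter> Y"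
    by metis
  have "Y \<subseteq> (\<Union>\<theta>\<in>\<Theta>. U \<theta>)" using pointwise U_Y by blast
  then obtain C where C: "C \<subseteq> \<Theta>" "finite C" "Y \<subseteq> (\<Union>\<theta>\<in>C. U \<theta>)"
    using compactE_image[OF Y(1), of \<Theta> U] U by metis
  have "\<forall>y\<in>Y. \<exists>\<theta>\<in>C. f y \<theta> < c" using C U_Y by blast
  then show ?thesis
    using concave_minimax_finite_cover[OF cont conc mix nonempty C(2,1) order_refl Y] by blast
qed

lemma sqrt_mult_le_weighted_mean:
  fixes a b t :: real
  assumes "0 \<le> a" "0 \<le> b" "0 < t"
  shows "sqrt (a * b) \<le> (t * a + b / t) / 2"
proof -
  have "0 \<le> (t * sqrt a - sqrt b)\<^sup>2" by simp
  also have "\<dots> = t\<^sup>2 * a + b - 2 * t * sqrt (a * b)"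
    using assms by (simp add: power2_eq_square algebra_simps real_sqrt_mult)
  finally have "sqrt (a * b) \<le> (t\<^sup>2 * a + b) / (2 * t)" using assms by (simp add: field_simps)
  also have "\<dots> = (t * a + b / t) / 2" using assms by (simp add: field_simps power2_eq_square)
  finally show ?thesis .
qed

lemma exp_half_ln_ratio:
  fixes a b :: real
  assumes "0 < a" "0 < b"
  shows "exp (ln (a / b) / 2) * b = sqrt (a * b)"
proof -
  have "exp (ln (a / b) / 2) = (a / b) powr (1 / 2)" using assms by (simp add: powr_def)
  also have "\<dots> = sqrt (a / b)" using assms by (simp add: powr_half_sqrt)
  finally have "exp (ln (a / b) / 2) = sqrt (a / b)" .
  then have "exp (ln (a / b) / 2) * b = sqrt a * (b / sqrt b)"
    using assms by (simp add: real_sqrt_divide)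
  also have "\<dots> = sqrt (a * b)" using assms by (simp add: real_div_sqrt real_sqrt_mult)
  finally show ?thesis .
qed

lemma concave_on_compose_affine:
  assumes h: "concave_on S h" and T: "convex T" and BT: "B ` T \<subseteq> S"
    and B: "\<And>x y t. x \<in> T \<Longrightarrow> y \<in> T \<Longrightarrow> 0 \<le> (t :: real) \<Longrightarrow> t \<le> 1 \<Longrightarrow>
              B ((1 - t) *\<^sub>R x + t *\<^sub>R y) = (1 - t) *\<^sub>R B x + t *\<^sub>R B y"
  shows "concave_on T (\<lambda>x. h (B x))"
  unfolding concave_on_def
proof (rule convex_onI[OF _ T])
  fix t :: real and x y assume "0 < t" "t < 1" "x \<in> T" "y \<in> T"
  then show "- h (B ((1 - t) *\<^sub>R x + t *\<^sub>R y)) \<le> (1 - t) * - h (B x) + t * - h (B y)"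
    using concave_onD[OF h, of t "B x" "B y"] B[of x y t] BT by (auto simp: image_subset_iff)
qed

locale good_family =
  fixes P :: "'w::polish_space measure" and M :: "'m::euclidean_space set"
    and p :: "'m \<Rightarrow> 'w \<Rightarrow> real" and F :: "('w \<Rightarrow> real) set"
  assumes good: "good_pair P M p F"
begin

definition moment :: "('w \<Rightarrow> real) \<Rightarrow> 'm \<Rightarrow> real" where
  "moment \<phi> \<mu> = (\<integral>\<omega>. exp (\<phi> \<omega>) * p \<mu> \<omega> \<partial>P)"

definition affinity :: "'m \<Rightarrow> 'm \<Rightarrow> real" where
  "affinity \<mu> \<nu> = (\<integral>\<omega>. sqrt (p \<mu> \<omega> * p \<nu> \<omega>) \<partial>P)"

definition half_llr :: "'m \<Rightarrow> 'm \<Rightarrow> 'w \<Rightarrow> real" where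
  "half_llr \<mu> \<nu> \<omega> = ln (p \<mu> \<omega> / p \<nu> \<omega>) / 2"

lemma sets_P [measurable_cong]: "sets P = sets borel"
  using good by (simp add: good_pair_def)

lemma space_P: "space P = UNIV"
  using sets_eq_imp_space_eq[OF sets_P] by simp

lemma p_measurable: "\<mu> \<in> M \<Longrightarrow> p \<mu> \<in> borel_measurable P"
  using good by (simp add: good_pair_def)

lemma p_pos: "\<mu> \<in> M \<Longrightarrow> 0 < p \<mu> \<omega>"
  using good by (simp add: good_pair_def)

lemma p_nn_integral: "\<mu> \<in> M \<Longrightarrow> (\<integral>\<^sup>+ \<omega>. ennreal (p \<mu> \<omega>) \<partial>P) = 1"
  using good by (simp add: good_pair_def)

lemma M_open: "open M"
  using good by (simp add: good_pair_def)

lemma M_convex: "convex M"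
  using good by (simp add: good_pair_def)

lemma F_const: "(\<lambda>_. c) \<in> F"
  using good by (simp add: good_pair_def)

lemma F_llr: "\<mu> \<in> M \<Longrightarrow> \<nu> \<in> M \<Longrightarrow> (\<lambda>\<omega>. ln (p \<mu> \<omega> / p \<nu> \<omega>)) \<in> F"
  using good by (simp add: good_pair_def)

lemma moment_integrable: "\<phi> \<in> F \<Longrightarrow> \<mu> \<in> M \<Longrightarrow> integrable P (\<lambda>\<omega>. exp (\<phi> \<omega>) * p \<mu> \<omega>)"
  using good by (simp add: good_pair_def)

lemma ln_moment_concave: "\<phi> \<in> F \<Longrightarrow> concave_on M (\<lambda>\<mu>. ln (moment \<phi> \<mu>))"
  using good by (simp add: good_pair_def moment_def)

lemma F_lin:
  assumes "\<phi> \<in> F" "\<psi> \<in> F"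
  shows "(\<lambda>\<omega>. a * \<phi> \<omega> + b * \<psi> \<omega>) \<in> F"
proof -
  obtain B :: "('w \<Rightarrow> real) list"
    where B: "F = {(\<lambda>\<omega>. \<Sum>i<length B. c i * (B ! i) \<omega>) | c :: nat \<Rightarrow> real. True}"
    using good by (auto simp: good_pair_def fin_dim_fun_space_def)
  obtain c1 c2 where c1: "\<phi> = (\<lambda>\<omega>. \<Sum>i<length B. c1 i * (B ! i) \<omega>)"
    and c2: "\<psi> = (\<lambda>\<omega>. \<Sum>i<length B. c2 i * (B ! i) \<omega>)"
    using assms B by blast
  have "(\<lambda>\<omega>. a * \<phi> \<omega> + b * \<psi> \<omega>) = (\<lambda>\<omega>. \<Sum>i<length B. (a * c1 i + b * c2 i) * (B ! i) \<omega>)"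
    unfolding c1 c2 by (auto simp: sum_distrib_left sum.distrib algebra_simps)
  then show ?thesis unfolding B by (intro CollectI exI[of _ "\<lambda>i. a * c1 i + b * c2 i"]) simp
qed

lemma F_scale: "\<phi> \<in> F \<Longrightarrow> (\<lambda>\<omega>. a * \<phi> \<omega>) \<in> F"
  using F_lin[of \<phi> \<phi> a 0] by simp

lemma F_div: "\<phi> \<in> F \<Longrightarrow> (\<lambda>\<omega>. \<phi> \<omega> / a) \<in> F"
  using F_scale[of \<phi> "1 / a"] by simp

lemma F_neg: "\<phi> \<in> F \<Longrightarrow> (\<lambda>\<omega>. - \<phi> \<omega>) \<in> F"
  using F_scale[of \<phi> "- 1"] by simp

lemma F_neg_div: "\<phi> \<in> F \<Longrightarrow> (\<lambda>\<omega>. - \<phi> \<omega> / a) \<in> F"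
  using F_scale[of \<phi> "- 1 / a"] by simp

lemma p_integrable: "\<mu> \<in> M \<Longrightarrow> integrable P (p \<mu>)"
  using moment_integrable[OF F_const[of 0]] by simp

lemma p_integral: "\<mu> \<in> M \<Longrightarrow> (\<integral>\<omega>. p \<mu> \<omega> \<partial>P) = 1"
  using integral_eq_nn_integral[of "p \<mu>" P] p_nn_integral p_measurable p_pos
  by (simp add: less_imp_le)

text \<open>The reference measure is not null (it carries a probability density), so a positive
  integrable function has a positive integral.\<close>

lemma integral_pos:
  fixes f :: "'w \<Rightarrow> real"
  assumes f: "integrable P f" and pos: "\<And>\<omega>. f \<omega> > 0" and \<mu>: "\<mu> \<in> M"
  shows "integral\<^sup>L P f > 0"
proof (rule ccontr)
  assume "\<not> integral\<^sup>L P f > 0"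
  moreover have "integral\<^sup>L P f \<ge> 0" using pos by (simp add: less_imp_le)
  ultimately have "AE \<omega> in P. f \<omega> = 0"
    using integral_nonneg_eq_0_iff_AE[OF f] pos by (simp add: less_imp_le)
  then have "AE \<omega> in P. p \<mu> \<omega> = 0" using pos by (auto elim: AE_mp simp: less_imp_neq[symmetric])
  then have "(\<integral>\<omega>. p \<mu> \<omega> \<partial>P) = 0" using integral_eq_zero_AE by blast
  then show False using p_integral[OF \<mu>] by simp
qed

lemma moment_pos: "\<phi> \<in> F \<Longrightarrow> \<mu> \<in> M \<Longrightarrow> moment \<phi> \<mu> > 0"
  unfolding moment_def using moment_integrable p_pos by (intro integral_pos) auto

text \<open>The log-moment is concave on the open set M, hence continuous.\<close>

lemma ln_moment_continuous: "\<psi> \<in> F \<Longrightarrow> continuous_on M (\<lambda>\<mu>. ln (moment \<psi> \<mu>))"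
  using convex_on_continuous[OF M_open, of "\<lambda>\<mu>. - ln (moment \<psi> \<mu>)"] ln_moment_concave
    continuous_on_minus[of M "\<lambda>\<mu>. - ln (moment \<psi> \<mu>)"]
  by (simp add: concave_on_def)

text \<open>Hoelder's inequality in logarithmic form: the log-moment is convex in the exponent.
  Pointwise this is convexity of exp after normalising both moments to 1.\<close>

lemma ln_moment_convex:
  assumes u: "u \<in> F" and v: "v \<in> F" and \<mu>: "\<mu> \<in> M" and s: "0 \<le> s" "s \<le> 1"
  shows "ln (moment (\<lambda>\<omega>. (1 - s) * u \<omega> + s * v \<omega>) \<mu>)
           \<le> (1 - s) * ln (moment u \<mu>) + s * ln (moment v \<mu>)"
proof -
  define Iu where "Iu = moment u \<mu>"
  define Iv where "Iv = moment v \<mu>"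
  define w where "w = (\<lambda>\<omega>. (1 - s) * u \<omega> + s * v \<omega>)"
  define L where "L = (1 - s) * ln Iu + s * ln Iv"
  have Iu: "Iu > 0" and Iv: "Iv > 0" and w: "w \<in> F"
    unfolding Iu_def Iv_def w_def using moment_pos u v \<mu> F_lin[OF u v] by auto
  have pointwise: "exp (w \<omega>) * p \<mu> \<omega>
      \<le> exp L * ((1 - s) / Iu) * (exp (u \<omega>) * p \<mu> \<omega>) + exp L * (s / Iv) * (exp (v \<omega>) * p \<mu> \<omega>)"
    for \<omega>
  proof -
    define a where "a = u \<omega> - ln Iu"
    define b where "b = v \<omega> - ln Iv"
    have "w \<omega> = L + ((1 - s) * a + s * b)" by (simp add: w_def L_def a_def b_def algebra_simps)
    then have "exp (w \<omega>) = exp L * exp ((1 - s) * a + s * b)" by (simp add: exp_add)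
    also have "exp ((1 - s) * a + s * b) \<le> (1 - s) * exp a + s * exp b"
      using convex_onD[OF exp_convex, of s a b] s by simp
    finally have "exp (w \<omega>) \<le> exp L * ((1 - s) * exp a + s * exp b)" by simp
    moreover have "exp a = exp (u \<omega>) / Iu" "exp b = exp (v \<omega>) / Iv"
      using Iu Iv by (simp_all add: a_def b_def exp_diff)
    ultimately have "exp (w \<omega>) \<le> exp L * ((1 - s) / Iu) * exp (u \<omega>) + exp L * (s / Iv) * exp (v \<omega>)"
      by (simp add: algebra_simps)
    then have "exp (w \<omega>) * p \<mu> \<omega>
        \<le> (exp L * ((1 - s) / Iu) * exp (u \<omega>) + exp L * (s / Iv) * exp (v \<omega>)) * p \<mu> \<omega>"
      using p_pos[OF \<mu>, of \<omega>] by (intro mult_right_mono) auto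
    then show ?thesis by (simp add: algebra_simps)
  qed
  have "moment w \<mu> \<le> (\<integral>\<omega>. exp L * ((1 - s) / Iu) * (exp (u \<omega>) * p \<mu> \<omega>)
                            + exp L * (s / Iv) * (exp (v \<omega>) * p \<mu> \<omega>) \<partial>P)"
    unfolding moment_def
    using pointwise moment_integrable[OF w \<mu>] moment_integrable[OF u \<mu>] moment_integrable[OF v \<mu>]
    by (intro integral_mono) auto
  also have "\<dots> = exp L * ((1 - s) / Iu) * Iu + exp L * (s / Iv) * Iv"
    using moment_integrable[OF u \<mu>] moment_integrable[OF v \<mu>] by (simp add: Iu_def Iv_def moment_def)
  also have "\<dots> = exp L" using Iu Iv by (simp add: field_simps)
  finally have "ln (moment w \<mu>) \<le> L" using moment_pos[OF w \<mu>] by (metis exp_gt_zero ln_exp ln_le_cancel_iff)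
  then show ?thesis by (simp add: w_def L_def Iu_def Iv_def)
qed

text \<open>Joint convexity of the perspective of the log-moment, the function
  (phi, alpha) maps to alpha * ln moment (phi / alpha); this is what makes Phi convex-like
  in the parameter (phi, alpha).\<close>

lemma ln_moment_perspective:
  assumes \<phi>1: "\<phi>1 \<in> F" and \<phi>2: "\<phi>2 \<in> F" and \<alpha>: "\<alpha>1 > 0" "\<alpha>2 > 0" and \<mu>: "\<mu> \<in> M"
    and t: "0 \<le> t" "t \<le> 1"
  defines "\<alpha> \<equiv> (1 - t) * \<alpha>1 + t * \<alpha>2"
  shows "\<alpha> * ln (moment (\<lambda>\<omega>. ((1 - t) * \<phi>1 \<omega> + t * \<phi>2 \<omega>) / \<alpha>) \<mu>)
     \<le> (1 - t) * \<alpha>1 * ln (moment (\<lambda>\<omega>. \<phi>1 \<omega> / \<alpha>1) \<mu>) + t * \<alpha>2 * ln (moment (\<lambda>\<omega>. \<phi>2 \<omega> / \<alpha>2) \<mu>)"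
proof -
  have "\<alpha> > 0" using \<alpha> t unfolding \<alpha>_def
    by (cases "t = 0") (auto intro: add_nonneg_pos)
  define s where "s = t * \<alpha>2 / \<alpha>"
  have s: "0 \<le> s" "s \<le> 1" using t \<alpha> \<open>\<alpha> > 0\<close> by (simp_all add: s_def \<alpha>_def field_simps)
  have one_minus_s: "1 - s = (1 - t) * \<alpha>1 / \<alpha>" using \<open>\<alpha> > 0\<close> by (simp add: s_def \<alpha>_def field_simps)
  have mix: "(\<lambda>\<omega>. ((1 - t) * \<phi>1 \<omega> + t * \<phi>2 \<omega>) / \<alpha>)
      = (\<lambda>\<omega>. (1 - s) * (\<phi>1 \<omega> / \<alpha>1) + s * (\<phi>2 \<omega> / \<alpha>2))"
  proof
    fix \<omega>
    have "(1 - s) * (\<phi>1 \<omega> / \<alpha>1) + s * (\<phi>2 \<omega> / \<alpha>2)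
        = ((1 - t) * \<alpha>1 / \<alpha>) * (\<phi>1 \<omega> / \<alpha>1) + (t * \<alpha>2 / \<alpha>) * (\<phi>2 \<omega> / \<alpha>2)"
      unfolding one_minus_s by (simp add: s_def)
    also have "\<dots> = ((1 - t) * \<phi>1 \<omega> + t * \<phi>2 \<omega>) / \<alpha>"
      using \<alpha> \<open>\<alpha> > 0\<close> by (simp add: field_simps)
    finally show "((1 - t) * \<phi>1 \<omega> + t * \<phi>2 \<omega>) / \<alpha> = (1 - s) * (\<phi>1 \<omega> / \<alpha>1) + s * (\<phi>2 \<omega> / \<alpha>2)"
      by simp
  qed
  have "ln (moment (\<lambda>\<omega>. ((1 - t) * \<phi>1 \<omega> + t * \<phi>2 \<omega>) / \<alpha>) \<mu>)
      \<le> (1 - s) * ln (moment (\<lambda>\<omega>. \<phi>1 \<omega> / \<alpha>1) \<mu>) + s * ln (moment (\<lambda>\<omega>. \<phi>2 \<omega> / \<alpha>2) \<mu>)"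
    unfolding mix using ln_moment_convex[OF F_div[OF \<phi>1] F_div[OF \<phi>2] \<mu> s] .
  then have "\<alpha> * ln (moment (\<lambda>\<omega>. ((1 - t) * \<phi>1 \<omega> + t * \<phi>2 \<omega>) / \<alpha>) \<mu>)
      \<le> (\<alpha> * (1 - s)) * ln (moment (\<lambda>\<omega>. \<phi>1 \<omega> / \<alpha>1) \<mu>) + (\<alpha> * s) * ln (moment (\<lambda>\<omega>. \<phi>2 \<omega> / \<alpha>2) \<mu>)"
    using \<open>\<alpha> > 0\<close> by (subst mult.assoc)+ (simp flip: distrib_left)
  also have "\<alpha> * (1 - s) = (1 - t) * \<alpha>1" using \<open>\<alpha> > 0\<close> by (simp add: one_minus_s)
  also have "\<alpha> * s = t * \<alpha>2" using \<open>\<alpha> > 0\<close> by (simp add: s_def)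
  finally show ?thesis .
qed

lemma half_llr_in_F: "\<mu> \<in> M \<Longrightarrow> \<nu> \<in> M \<Longrightarrow> half_llr \<mu> \<nu> \<in> F"
  unfolding half_llr_def[abs_def] using F_div[OF F_llr] by blast

lemma sqrt_density_product:
  assumes "\<mu> \<in> M" "\<nu> \<in> M"
  shows "sqrt (p \<mu> \<omega> * p \<nu> \<omega>) = exp (half_llr \<mu> \<nu> \<omega>) * p \<nu> \<omega>"
    and "sqrt (p \<mu> \<omega> * p \<nu> \<omega>) = exp (- half_llr \<mu> \<nu> \<omega>) * p \<mu> \<omega>"
proof -
  show "sqrt (p \<mu> \<omega> * p \<nu> \<omega>) = exp (half_llr \<mu> \<nu> \<omega>) * p \<nu> \<omega>"
    using assms by (simp add: half_llr_def exp_half_ln_ratio p_pos)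
  have swap: "- half_llr \<mu> \<nu> \<omega> = ln (p \<nu> \<omega> / p \<mu> \<omega>) / 2"
    using p_pos assms by (simp add: half_llr_def ln_div)
  have "exp (- half_llr \<mu> \<nu> \<omega>) * p \<mu> \<omega> = sqrt (p \<nu> \<omega> * p \<mu> \<omega>)"
    unfolding swap by (rule exp_half_ln_ratio) (use p_pos assms in auto)
  then show "sqrt (p \<mu> \<omega> * p \<nu> \<omega>) = exp (- half_llr \<mu> \<nu> \<omega>) * p \<mu> \<omega>"
    by (simp add: mult.commute)
qed

lemma affinity_moment_right: "\<mu> \<in> M \<Longrightarrow> \<nu> \<in> M \<Longrightarrow> affinity \<mu> \<nu> = moment (half_llr \<mu> \<nu>) \<nu>"
  unfolding affinity_def moment_def by (simp add: sqrt_density_product(1))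

lemma affinity_moment_left:
  "\<mu> \<in> M \<Longrightarrow> \<nu> \<in> M \<Longrightarrow> affinity \<mu> \<nu> = moment (\<lambda>\<omega>. - half_llr \<mu> \<nu> \<omega>) \<mu>"
  unfolding affinity_def moment_def by (simp add: sqrt_density_product(2))

lemma affinity_integrable: "\<mu> \<in> M \<Longrightarrow> \<nu> \<in> M \<Longrightarrow> integrable P (\<lambda>\<omega>. sqrt (p \<mu> \<omega> * p \<nu> \<omega>))"
  using moment_integrable[OF half_llr_in_F] by (simp add: sqrt_density_product(1))

lemma affinity_pos: "\<mu> \<in> M \<Longrightarrow> \<nu> \<in> M \<Longrightarrow> affinity \<mu> \<nu> > 0"
  using affinity_moment_right moment_pos half_llr_in_F by simp

lemma affinity_self: "\<mu> \<in> M \<Longrightarrow> affinity \<mu> \<mu> = 1"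
  unfolding affinity_def using p_integral p_pos by (simp add: less_imp_le)

text \<open>Cauchy-Schwarz: the half log-likelihood ratio is the best test function, i.e.
  2 ln affinity \<le> ln moment phi nu + ln moment (- phi) mu for every phi in F.\<close>

lemma ln_affinity_le_moments:
  assumes \<phi>: "\<phi> \<in> F" and \<mu>\<nu>: "\<mu> \<in> M" "\<nu> \<in> M"
  shows "2 * ln (affinity \<mu> \<nu>) \<le> ln (moment \<phi> \<nu>) + ln (moment (\<lambda>\<omega>. - \<phi> \<omega>) \<mu>)"
proof -
  define I1 where "I1 = moment \<phi> \<nu>"
  define I2 where "I2 = moment (\<lambda>\<omega>. - \<phi> \<omega>) \<mu>"
  have I1: "I1 > 0" and I2: "I2 > 0"
    unfolding I1_def I2_def using moment_pos \<phi> F_neg[OF \<phi>] \<mu>\<nu> by auto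
  define t where "t = sqrt (I2 / I1)"
  have t: "t > 0" using I1 I2 by (simp add: t_def)
  have pointwise: "sqrt (p \<mu> \<omega> * p \<nu> \<omega>)
      \<le> (t / 2) * (exp (\<phi> \<omega>) * p \<nu> \<omega>) + (1 / (2 * t)) * (exp (- \<phi> \<omega>) * p \<mu> \<omega>)" for \<omega>
  proof -
    have "p \<mu> \<omega> * p \<nu> \<omega> = (exp (\<phi> \<omega>) * p \<nu> \<omega>) * (exp (- \<phi> \<omega>) * p \<mu> \<omega>)"
      by (simp add: exp_minus field_simps)
    then have "sqrt (p \<mu> \<omega> * p \<nu> \<omega>) = sqrt ((exp (\<phi> \<omega>) * p \<nu> \<omega>) * (exp (- \<phi> \<omega>) * p \<mu> \<omega>))"
      by (rule arg_cong)
    also have "\<dots> \<le> (t * (exp (\<phi> \<omega>) * p \<nu> \<omega>) + (exp (- \<phi> \<omega>) * p \<mu> \<omega>) / t) / 2"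
      using sqrt_mult_le_weighted_mean[of "exp (\<phi> \<omega>) * p \<nu> \<omega>" "exp (- \<phi> \<omega>) * p \<mu> \<omega>" t]
        p_pos \<mu>\<nu> t
      by (simp add: less_imp_le)
    finally show ?thesis by (simp add: field_simps)
  qed
  have "affinity \<mu> \<nu>
      \<le> (\<integral>\<omega>. (t / 2) * (exp (\<phi> \<omega>) * p \<nu> \<omega>) + (1 / (2 * t)) * (exp (- \<phi> \<omega>) * p \<mu> \<omega>) \<partial>P)"
    unfolding affinity_def
    using pointwise affinity_integrable[OF \<mu>\<nu>] moment_integrable[OF \<phi> \<mu>\<nu>(2)]
      moment_integrable[OF F_neg[OF \<phi>] \<mu>\<nu>(1)]
    by (intro integral_mono) auto
  also have "\<dots> = (t / 2) * I1 + (1 / (2 * t)) * I2"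
    using moment_integrable[OF \<phi> \<mu>\<nu>(2)] moment_integrable[OF F_neg[OF \<phi>] \<mu>\<nu>(1)]
    by (simp add: I1_def I2_def moment_def)
  also have "\<dots> = sqrt (I1 * I2)"
  proof -
    have "sqrt (I1 * I2) = t * I1" using I1 I2 t
      by (simp add: t_def real_sqrt_mult real_sqrt_divide field_simps)
    moreover have "I2 / t = t * I1" using I1 t by (simp add: t_def field_simps)
    ultimately show ?thesis using t by (simp add: field_simps)
  qed
  finally have "ln (affinity \<mu> \<nu>) \<le> ln (sqrt (I1 * I2))" using affinity_pos[OF \<mu>\<nu>] I1 I2 by simp
  also have "\<dots> = (ln I1 + ln I2) / 2" using I1 I2 by (simp add: ln_sqrt ln_mult)
  finally show ?thesis by (simp add: I1_def I2_def)
qed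

lemma mass_integrable: "\<mu> \<in> M \<Longrightarrow> E \<in> sets P \<Longrightarrow> integrable P (\<lambda>\<omega>. p \<mu> \<omega> * indicator E \<omega>)"
  using integrable_mult_indicator[of E P "p \<mu>"] p_integrable by (simp add: mult.commute)

lemma measure_density_eq:
  assumes \<mu>: "\<mu> \<in> M" and E: "E \<in> sets P"
  shows "measure (density P (\<lambda>\<omega>. ennreal (p \<mu> \<omega>))) E = (\<integral>\<omega>. p \<mu> \<omega> * indicator E \<omega> \<partial>P)"
proof -
  have "measure (density P (\<lambda>\<omega>. ennreal (p \<mu> \<omega>))) E
      = enn2real (\<integral>\<^sup>+ \<omega>. ennreal (p \<mu> \<omega>) * indicator E \<omega> \<partial>P)"
    unfolding measure_def using emeasure_density[of "\<lambda>\<omega>. ennreal (p \<mu> \<omega>)" P E] p_measurable[OF \<mu>] E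
    by simp
  also have "\<dots> = (\<integral>\<omega>. p \<mu> \<omega> * indicator E \<omega> \<partial>P)"
    using p_measurable[OF \<mu>] E p_pos[OF \<mu>]
    by (intro enn2real_nn_integral_eq_integral) (auto split: split_indicator simp: less_imp_le)
  finally show ?thesis .
qed

lemma mass_le_1: "\<mu> \<in> M \<Longrightarrow> E \<in> sets P \<Longrightarrow> (\<integral>\<omega>. p \<mu> \<omega> * indicator E \<omega> \<partial>P) \<le> 1"
  using mass_integrable p_integrable p_pos p_integral[of \<mu>]
    integral_mono[of P "\<lambda>\<omega>. p \<mu> \<omega> * indicator E \<omega>" "p \<mu>"]
  by (fastforce split: split_indicator simp: less_imp_le)

lemma affinity_lt_of_test:
  assumes \<mu>\<nu>: "\<mu> \<in> M" "\<nu> \<in> M" and E: "E1 \<in> sets P" "E2 \<in> sets P"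
    and cover: "\<And>\<omega>. \<omega> \<in> E1 \<or> \<omega> \<in> E2" and \<epsilon>_pos: "0 < \<epsilon>"
    and err1: "(\<integral>\<omega>. p \<mu> \<omega> * indicator E1 \<omega> \<partial>P) < \<epsilon>"
    and err2: "(\<integral>\<omega>. p \<nu> \<omega> * indicator E2 \<omega> \<partial>P) < \<epsilon>"
  shows "affinity \<mu> \<nu> < 2 * sqrt \<epsilon>"
proof -
  define s where "s = sqrt \<epsilon>"
  have s: "s > 0" using \<epsilon>_pos by (simp add: s_def)
  have ss: "s * s = \<epsilon>" using \<epsilon>_pos by (simp add: s_def)
  define f where "f = (\<lambda>\<omega>. (1/(2 * s)) * (p \<mu> \<omega> * indicator E1 \<omega>) + (s/2) * (p \<nu> \<omega> * indicator E1 \<omega>)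
     + (1/(2 * s)) * (p \<nu> \<omega> * indicator E2 \<omega>) + (s/2) * (p \<mu> \<omega> * indicator E2 \<omega>))"
  \<comment> \<open>On E1 the error mass of p mu gets the large weight 1/(2s), on E2 that of p nu.\<close>
  have pointwise: "sqrt (p \<mu> \<omega> * p \<nu> \<omega>) \<le> f \<omega>" for \<omega>
  proof -
    have p_nonneg: "0 \<le> p \<mu> \<omega>" "0 \<le> p \<nu> \<omega>" using p_pos \<mu>\<nu> less_imp_le by auto
    have inv_s: "1/s > 0" using s by simp
    have on_E1: "sqrt (p \<mu> \<omega> * p \<nu> \<omega>) \<le> (1/(2 * s)) * p \<mu> \<omega> + (s/2) * p \<nu> \<omega>"
      using sqrt_mult_le_weighted_mean[OF p_nonneg inv_s] s by (simp add: field_simps)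
    have on_E2: "sqrt (p \<mu> \<omega> * p \<nu> \<omega>) \<le> (1/(2 * s)) * p \<nu> \<omega> + (s/2) * p \<mu> \<omega>"
      using sqrt_mult_le_weighted_mean[OF p_nonneg(2,1) inv_s] s by (simp add: field_simps mult.commute)
    have nonneg: "0 \<le> (1/(2 * s)) * p \<mu> \<omega> + (s/2) * p \<nu> \<omega>" "0 \<le> (1/(2 * s)) * p \<nu> \<omega> + (s/2) * p \<mu> \<omega>"
      using p_nonneg s by auto
    show ?thesis
      using cover[of \<omega>] on_E1 on_E2 nonneg by (auto simp: f_def split: split_indicator)
  qed
  have masses_integrable:
    "integrable P (\<lambda>\<omega>. p \<mu> \<omega> * indicator E1 \<omega>)" "integrable P (\<lambda>\<omega>. p \<nu> \<omega> * indicator E1 \<omega>)"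
    "integrable P (\<lambda>\<omega>. p \<nu> \<omega> * indicator E2 \<omega>)" "integrable P (\<lambda>\<omega>. p \<mu> \<omega> * indicator E2 \<omega>)"
    using mass_integrable \<mu>\<nu> E by auto
  have "affinity \<mu> \<nu> \<le> integral\<^sup>L P f"
    unfolding affinity_def using pointwise affinity_integrable[OF \<mu>\<nu>] masses_integrable unfolding f_def by (intro integral_mono) auto
  also have "integral\<^sup>L P f = (1/(2 * s)) * (\<integral>\<omega>. p \<mu> \<omega> * indicator E1 \<omega> \<partial>P)
      + (s/2) * (\<integral>\<omega>. p \<nu> \<omega> * indicator E1 \<omega> \<partial>P)
      + (1/(2 * s)) * (\<integral>\<omega>. p \<nu> \<omega> * indicator E2 \<omega> \<partial>P)
      + (s/2) * (\<integral>\<omega>. p \<mu> \<omega> * indicator E2 \<omega> \<partial>P)"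
    unfolding f_def using masses_integrable by simp
  also have "\<dots> < (1/(2 * s)) * \<epsilon> + (s/2) * 1 + (1/(2 * s)) * \<epsilon> + (s/2) * 1"
  proof -
    have "(1/(2 * s)) * (\<integral>\<omega>. p \<mu> \<omega> * indicator E1 \<omega> \<partial>P) < (1/(2 * s)) * \<epsilon>"
      using err1 s by (simp add: divide_strict_right_mono)
    moreover have "(1/(2 * s)) * (\<integral>\<omega>. p \<nu> \<omega> * indicator E2 \<omega> \<partial>P) < (1/(2 * s)) * \<epsilon>"
      using err2 s by (simp add: divide_strict_right_mono)
    moreover have "(s/2) * (\<integral>\<omega>. p \<nu> \<omega> * indicator E1 \<omega> \<partial>P) \<le> (s/2) * 1"
      using mass_le_1[OF \<mu>\<nu>(2) E(1)] s by (intro mult_left_mono) auto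
    moreover have "(s/2) * (\<integral>\<omega>. p \<mu> \<omega> * indicator E2 \<omega> \<partial>P) \<le> (s/2) * 1"
      using mass_le_1[OF \<mu>\<nu>(1) E(2)] s by (intro mult_left_mono) auto
    ultimately show ?thesis by linarith
  qed
  also have "\<dots> = 2 * s" using s ss by (simp add: field_simps)
  finally show ?thesis by (simp add: s_def)
qed

text \<open>Proof: represent the
  affinity at the intermediate point as a moment of the optimal test function, use concavity
  of the log-moment in the parameter, and bound both endpoints by Cauchy-Schwarz.\<close>

lemma ln_affinity_segment:
  assumes \<mu>: "\<mu> \<in> M" and \<nu>: "\<nu> \<in> M" and l: "0 \<le> l" "l \<le> 1"
  shows "l * ln (affinity \<mu> \<nu>) \<le> ln (affinity ((1 - l) *\<^sub>R \<nu> + l *\<^sub>R \<mu>) \<nu>)"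
proof -
  define \<mu>' where "\<mu>' = (1 - l) *\<^sub>R \<nu> + l *\<^sub>R \<mu>"
  have \<mu>': "\<mu>' \<in> M" using convexD_alt[OF M_convex \<nu> \<mu>] l by (simp add: \<mu>'_def)
  define \<phi> where "\<phi> = half_llr \<mu>' \<nu>"
  have \<phi>: "\<phi> \<in> F" and neg_\<phi>: "(\<lambda>\<omega>. - \<phi> \<omega>) \<in> F"
    unfolding \<phi>_def using half_llr_in_F[OF \<mu>' \<nu>] F_neg by auto
  define a where "a = ln (moment \<phi> \<nu>)"
  define b where "b = (\<lambda>\<kappa>. ln (moment (\<lambda>\<omega>. - \<phi> \<omega>) \<kappa>))"
  have split: "2 * ln (affinity \<mu>' \<nu>) = a + b \<mu>'"
    using affinity_moment_right[OF \<mu>' \<nu>] affinity_moment_left[OF \<mu>' \<nu>]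
    by (simp add: a_def b_def \<phi>_def)
  have b_concave: "(1 - l) * b \<nu> + l * b \<mu> \<le> b \<mu>'"
    using concave_onD[OF ln_moment_concave[OF neg_\<phi>], of l \<nu> \<mu>] l \<mu> \<nu>
    by (simp add: b_def \<mu>'_def)
  have "2 * ln (affinity \<mu> \<nu>) \<le> a + b \<mu>" and "0 \<le> a + b \<nu>"
    using ln_affinity_le_moments[OF \<phi> \<mu> \<nu>] ln_affinity_le_moments[OF \<phi> \<nu> \<nu>] affinity_self[OF \<nu>]
    by (simp_all add: a_def b_def)
  then have "l * (2 * ln (affinity \<mu> \<nu>)) \<le> l * (a + b \<mu>)" and "0 \<le> (1 - l) * (a + b \<nu>)"
    using l by (simp_all add: mult_left_mono)
  then have "l * (2 * ln (affinity \<mu> \<nu>)) \<le> 2 * ln (affinity \<mu>' \<nu>)"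
    using split b_concave by (simp add: algebra_simps)
  then show ?thesis by (simp add: \<mu>'_def)
qed

end

lemma Phi_star_le:
  assumes small: "\<And>c. B < c \<Longrightarrow> \<exists>\<phi>\<in>F. \<exists>\<alpha>>0. \<forall>x\<in>X. \<forall>y\<in>X. Phi_r P p A g r x y \<phi> \<alpha> < c"
  shows "Phi_star P p A X F g r \<le> ereal (B / 2)"
proof -
  define V where "V = (INF \<theta>\<in>F \<times> {0<..}.
    SUP xy\<in>X \<times> X. ereal (Phi_r P p A g r (fst xy) (snd xy) (fst \<theta>) (snd \<theta>)))"
  have V_le: "V \<le> ereal c" if c: "B < c" for c
  proof -
    obtain \<phi> \<alpha> where \<theta>: "(\<phi>, \<alpha>) \<in> F \<times> {0<..}"
      and lt: "\<forall>x\<in>X. \<forall>y\<in>X. Phi_r P p A g r x y \<phi> \<alpha> < c"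
      using small[OF c] by auto
    have "(SUP xy\<in>X \<times> X. ereal (Phi_r P p A g r (fst xy) (snd xy) \<phi> \<alpha>)) \<le> ereal c"
      using lt by (intro SUP_least) (auto simp: less_imp_le)
    then show ?thesis unfolding V_def using \<theta> by (intro INF_lower2[of "(\<phi>, \<alpha>)"]) auto
  qed
  have "V \<le> ereal B"
  proof (rule dense_ge)
    fix c assume c: "ereal B < c"
    then show "V \<le> c" using V_le by (cases c) auto
  qed
  then have "ereal (1 / 2) * V \<le> ereal (B / 2)" by (cases V) auto
  then show ?thesis unfolding Phi_star_def V_def by simp
qed

locale estimation_problem = good_family P M p F
  for P :: "'w::polish_space measure" and M :: "'m::euclidean_space set"
    and p :: "'m \<Rightarrow> 'w \<Rightarrow> real" and F :: "('w \<Rightarrow> real) set" +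
  fixes X :: "'n::euclidean_space set" and A :: "'n \<Rightarrow> 'm" and g :: 'n
  assumes X_compact: "compact X" and X_convex: "convex X"
    and A_affine: "\<exists>L b. linear L \<and> A = (\<lambda>x. L x + b)"
    and A_X: "A ` X \<subseteq> M"
begin

lemma A_convex_combination: "A ((1 - t) *\<^sub>R x + t *\<^sub>R y) = (1 - t) *\<^sub>R A x + t *\<^sub>R A y"
proof -
  obtain L b where L: "linear L" and A: "A = (\<lambda>x. L x + b)" using A_affine by blast
  have "L ((1 - t) *\<^sub>R x + t *\<^sub>R y) = (1 - t) *\<^sub>R L x + t *\<^sub>R L y"
    using L by (simp add: linear_add linear_scale)
  moreover have "b = (1 - t) *\<^sub>R b + t *\<^sub>R b" by (simp add: scaleR_left_diff_distrib)
  ultimately show ?thesis unfolding A by (simp add: algebra_simps)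
qed

lemma A_continuous: "continuous_on S A"
proof -
  obtain L b where L: "linear L" and A: "A = (\<lambda>x. L x + b)" using A_affine by blast
  have "continuous_on S L" using L linear_continuous_on linear_conv_bounded_linear by blast
  then show ?thesis unfolding A by (intro continuous_intros)
qed

lemma Phi_r_moment:
  "Phi_r P p A g r x y \<phi> \<alpha> = g \<bullet> x - g \<bullet> y + \<alpha> * ln (moment (\<lambda>\<omega>. \<phi> \<omega> / \<alpha>) (A y))
     + \<alpha> * ln (moment (\<lambda>\<omega>. - \<phi> \<omega> / \<alpha>) (A x)) + 2 * \<alpha> * r"
  unfolding Phi_r_def moment_def by simp

lemma Phi_r_continuous:
  assumes \<phi>: "\<phi> \<in> F"
  shows "continuous_on (X \<times> X) (\<lambda>z. Phi_r P p A g r (fst z) (snd z) \<phi> \<alpha>)"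
proof -
  have "continuous_on (X \<times> X) (\<lambda>z. ln (moment \<psi> (A (f z))))"
    if "\<psi> \<in> F" "f = fst \<or> f = snd" for \<psi> and f :: "'n \<times> 'n \<Rightarrow> 'n"
  proof (rule continuous_on_compose2[OF ln_moment_continuous[OF that(1)]])
    show "continuous_on (X \<times> X) (\<lambda>z. A (f z))"
      using that(2) by (auto intro!: continuous_on_compose2[OF A_continuous[of UNIV]] continuous_intros)
    show "(\<lambda>z. A (f z)) ` (X \<times> X) \<subseteq> M" using that(2) A_X by auto
  qed
  from this[OF F_div[OF \<phi>], of snd] this[OF F_neg_div[OF \<phi>], of fst] show ?thesis
    unfolding Phi_r_moment
    by (intro continuous_on_add continuous_on_mult_left continuous_on_const) (auto intro!: continuous_intros)
qed

lemma Phi_r_concave: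
  assumes \<phi>: "\<phi> \<in> F" and \<alpha>: "\<alpha> > 0"
  shows "concave_on (X \<times> X) (\<lambda>z. Phi_r P p A g r (fst z) (snd z) \<phi> \<alpha>)"
proof -
  have XX: "convex (X \<times> X)" using convex_Times[OF X_convex X_convex] .
  have "concave_on (X \<times> X) (\<lambda>z. ln (moment \<psi> (A (f z))))"
    if "\<psi> \<in> F" "f = fst \<or> f = snd" for \<psi> and f :: "'n \<times> 'n \<Rightarrow> 'n"
    using that A_X
    by (intro concave_on_compose_affine[OF ln_moment_concave XX]) (auto simp: A_convex_combination)
  moreover have "concave_on (X \<times> X) (\<lambda>z. g \<bullet> fst z - g \<bullet> snd z)"
    using concave_on_compose_affine[of UNIV "\<lambda>s. s" "X \<times> X" "\<lambda>z. g \<bullet> fst z - g \<bullet> snd z"]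
    by (simp add: concave_on_ident XX inner_add_right algebra_simps)
  ultimately show ?thesis
    unfolding Phi_r_moment using \<phi> \<alpha> F_div F_neg_div
    by (intro concave_on_add concave_on_cmul concave_on_const[THEN iffD2] XX) auto
qed

text \<open>In the parameter (phi, alpha), Phi is convex (by the perspective inequality).\<close>

lemma Phi_r_convex_parameter:
  assumes \<phi>: "\<phi>1 \<in> F" "\<phi>2 \<in> F" and \<alpha>: "\<alpha>1 > 0" "\<alpha>2 > 0" and t: "0 \<le> t" "t \<le> 1"
    and xy: "x \<in> X" "y \<in> X"
  shows "Phi_r P p A g r x y (\<lambda>\<omega>. (1 - t) * \<phi>1 \<omega> + t * \<phi>2 \<omega>) ((1 - t) * \<alpha>1 + t * \<alpha>2)
     \<le> (1 - t) * Phi_r P p A g r x y \<phi>1 \<alpha>1 + t * Phi_r P p A g r x y \<phi>2 \<alpha>2"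
proof -
  define \<alpha> where "\<alpha> = (1 - t) * \<alpha>1 + t * \<alpha>2"
  have Ax: "A x \<in> M" and Ay: "A y \<in> M" using A_X xy by auto
  have "(\<lambda>\<omega>. ((1 - t) * (- \<phi>1 \<omega>) + t * (- \<phi>2 \<omega>)) / \<alpha>) = (\<lambda>\<omega>. - ((1 - t) * \<phi>1 \<omega> + t * \<phi>2 \<omega>) / \<alpha>)"
    by (simp add: algebra_simps)
  then have "\<alpha> * ln (moment (\<lambda>\<omega>. - ((1 - t) * \<phi>1 \<omega> + t * \<phi>2 \<omega>) / \<alpha>) (A x))
     \<le> (1 - t) * \<alpha>1 * ln (moment (\<lambda>\<omega>. - \<phi>1 \<omega> / \<alpha>1) (A x))
        + t * \<alpha>2 * ln (moment (\<lambda>\<omega>. - \<phi>2 \<omega> / \<alpha>2) (A x))"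
    using ln_moment_perspective[OF F_neg[OF \<phi>(1)] F_neg[OF \<phi>(2)] \<alpha> Ax t] by (simp add: \<alpha>_def)
  moreover have "\<alpha> * ln (moment (\<lambda>\<omega>. ((1 - t) * \<phi>1 \<omega> + t * \<phi>2 \<omega>) / \<alpha>) (A y))
     \<le> (1 - t) * \<alpha>1 * ln (moment (\<lambda>\<omega>. \<phi>1 \<omega> / \<alpha>1) (A y))
        + t * \<alpha>2 * ln (moment (\<lambda>\<omega>. \<phi>2 \<omega> / \<alpha>2) (A y))"
    using ln_moment_perspective[OF \<phi> \<alpha> Ay t] by (simp add: \<alpha>_def)
  moreover have "2 * \<alpha> * r = (1 - t) * (2 * \<alpha>1 * r) + t * (2 * \<alpha>2 * r)"
    "g \<bullet> x - g \<bullet> y = (1 - t) * (g \<bullet> x - g \<bullet> y) + t * (g \<bullet> x - g \<bullet> y)"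
    by (simp_all add: \<alpha>_def algebra_simps)
  ultimately show ?thesis
    unfolding Phi_r_moment \<alpha>_def[symmetric] by (simp add: algebra_simps)
qed

lemma Phi_r_half_llr:
  assumes xy: "x \<in> X" "y \<in> X" and \<alpha>: "\<alpha> > 0"
  shows "Phi_r P p A g r x y (\<lambda>\<omega>. \<alpha> * half_llr (A x) (A y) \<omega>) \<alpha>
       = g \<bullet> x - g \<bullet> y + 2 * \<alpha> * (ln (affinity (A x) (A y)) + r)"
proof -
  have Ax: "A x \<in> M" and Ay: "A y \<in> M" using A_X xy by auto
  have "(\<lambda>\<omega>. \<alpha> * half_llr (A x) (A y) \<omega> / \<alpha>) = half_llr (A x) (A y)"
    "(\<lambda>\<omega>. - (\<alpha> * half_llr (A x) (A y) \<omega>) / \<alpha>) = (\<lambda>\<omega>. - half_llr (A x) (A y) \<omega>)"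
    using \<alpha> by auto
  then show ?thesis
    unfolding Phi_r_moment
    by (simp add: affinity_moment_right[OF Ax Ay, symmetric] affinity_moment_left[OF Ax Ay, symmetric]
        algebra_simps)
qed

text \<open>An estimate that is accurate at two signals whose values of g differ by more than
  2 delta0 yields a test between them, so their affinity is small.\<close>

lemma affinity_lt_of_accurate_estimate:
  assumes ghat: "ghat \<in> borel_measurable P" and xy: "x \<in> X" "y \<in> X"
    and far: "g \<bullet> x - g \<bullet> y > 2 * \<delta>0" and \<epsilon>: "0 < \<epsilon>"
    and accurate: "miss_prob P p A g ghat x \<delta>0 < \<epsilon>" "miss_prob P p A g ghat y \<delta>0 < \<epsilon>"
  shows "affinity (A x) (A y) < 2 * sqrt \<epsilon>"
proof -
  have Ax: "A x \<in> M" and Ay: "A y \<in> M" using A_X xy by auto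
  define E1 where "E1 = {\<omega> \<in> space P. \<bar>ghat \<omega> - g \<bullet> x\<bar> > \<delta>0}"
  define E2 where "E2 = {\<omega> \<in> space P. \<bar>ghat \<omega> - g \<bullet> y\<bar> > \<delta>0}"
  have E: "E1 \<in> sets P" "E2 \<in> sets P" unfolding E1_def E2_def using ghat by measurable
  have "\<omega> \<in> E1 \<or> \<omega> \<in> E2" for \<omega>
    using far by (auto simp: E1_def E2_def space_P)
  moreover have "(\<integral>\<omega>. p (A x) \<omega> * indicator E1 \<omega> \<partial>P) < \<epsilon>" "(\<integral>\<omega>. p (A y) \<omega> * indicator E2 \<omega> \<partial>P) < \<epsilon>"
    using accurate measure_density_eq[OF Ax E(1)] measure_density_eq[OF Ay E(2)]
    unfolding miss_prob_def E1_def E2_def by simp_all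
  ultimately show ?thesis using affinity_lt_of_test[OF Ax Ay E _ \<epsilon>] by blast
qed

text \<open>Apply the previous
  lemma to y and the point x' at fraction l of the way from y to x.\<close>

lemma gap_bound_of_accurate_estimate:
  assumes ghat: "ghat \<in> borel_measurable P" and xy: "x \<in> X" "y \<in> X"
    and l: "0 < l" "l \<le> 1" and \<delta>: "0 < \<delta>"
    and accurate: "\<And>x. x \<in> X \<Longrightarrow> miss_prob P p A g ghat x \<delta>0 < \<delta>\<^sup>2 / 4"
    and close: "ln \<delta> \<le> l * ln (affinity (A x) (A y))"
  shows "l * (g \<bullet> x - g \<bullet> y) \<le> 2 * \<delta>0"
proof (rule ccontr)
  assume "\<not> l * (g \<bullet> x - g \<bullet> y) \<le> 2 * \<delta>0"
  define x' where "x' = (1 - l) *\<^sub>R y + l *\<^sub>R x"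
  have x': "x' \<in> X" using convexD_alt[OF X_convex xy(2,1)] l by (simp add: x'_def)
  have "g \<bullet> x' - g \<bullet> y = l * (g \<bullet> x - g \<bullet> y)" by (simp add: x'_def inner_add_right algebra_simps)
  then have "affinity (A x') (A y) < 2 * sqrt (\<delta>\<^sup>2 / 4)"
    using \<open>\<not> _\<close> \<delta> accurate x' xy(2) by (intro affinity_lt_of_accurate_estimate[OF ghat x' xy(2)]) auto
  also have "2 * sqrt (\<delta>\<^sup>2 / 4) = \<delta>" using \<delta> by (simp add: real_sqrt_divide)
  finally have "affinity (A x') (A y) < \<delta>" .
  moreover have "0 < affinity (A x') (A y)" using affinity_pos A_X x' xy by auto
  ultimately have "ln (affinity (A x') (A y)) < ln \<delta>" by simp
  moreover have "l * ln (affinity (A x) (A y)) \<le> ln (affinity (A x') (A y))"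
    using ln_affinity_segment[of "A x" "A y" l] A_X xy l by (auto simp: x'_def A_convex_combination)
  ultimately show False using close by simp
qed

text \<open>Pointwise in (x, y), Phi can be made smaller than any c exceeding the gap g x - g y
  whenever the affinity is at least exp (- r): take phi = alpha * half_llr and let alpha tend
  to 0; when the affinity is smaller, let alpha tend to infinity instead.\<close>

lemma Phi_r_pointwise_small:
  assumes xy: "x \<in> X" "y \<in> X"
    and gap: "0 \<le> ln (affinity (A x) (A y)) + r \<Longrightarrow> g \<bullet> x - g \<bullet> y < c"
  shows "\<exists>\<phi>\<in>F. \<exists>\<alpha>>0. Phi_r P p A g r x y \<phi> \<alpha> < c"
proof -
  define D where "D = g \<bullet> x - g \<bullet> y"
  define k where "k = ln (affinity (A x) (A y)) + r"
  have "\<exists>\<alpha>>0. D + 2 * \<alpha> * k < c"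
  proof (cases "k < 0")
    case True
    define \<alpha> where "\<alpha> = (\<bar>D\<bar> + \<bar>c\<bar> + 1) / (- 2 * k)"
    have "\<alpha> > 0" using True by (simp add: \<alpha>_def divide_pos_neg)
    moreover have "2 * \<alpha> * k = - (\<bar>D\<bar> + \<bar>c\<bar> + 1)" using True by (simp add: \<alpha>_def field_simps)
    ultimately show ?thesis by (intro exI[of _ \<alpha>]) auto
  next
    case False
    then have "D < c" using gap by (simp add: D_def k_def)
    define \<alpha> where "\<alpha> = (c - D) / (4 * k + 4)"
    have "\<alpha> > 0" using \<open>D < c\<close> False by (simp add: \<alpha>_def)
    moreover have "2 * \<alpha> * k = (c - D) * (2 * k / (4 * k + 4))" using False by (simp add: \<alpha>_def field_simps)
    moreover have "(c - D) * (2 * k / (4 * k + 4)) < (c - D) * 1"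
      using \<open>D < c\<close> False by (intro mult_strict_left_mono) (simp_all add: field_simps)
    ultimately show ?thesis by (intro exI[of _ \<alpha>]) auto
  qed
  then obtain \<alpha> where "\<alpha> > 0" "D + 2 * \<alpha> * k < c" by blast
  then show ?thesis
    using Phi_r_half_llr[OF xy \<open>\<alpha> > 0\<close>] F_scale[OF half_llr_in_F, of "A x" "A y"] A_X xy
    by (intro bexI[of _ "\<lambda>\<omega>. \<alpha> * half_llr (A x) (A y) \<omega>"] exI[of _ \<alpha>]) (auto simp: D_def k_def)
qed

lemma Phi_r_uniformly_small:
  assumes pointwise: "\<And>x y. x \<in> X \<Longrightarrow> y \<in> X \<Longrightarrow> \<exists>\<phi>\<in>F. \<exists>\<alpha>>0. Phi_r P p A g r x y \<phi> \<alpha> < c"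
  shows "\<exists>\<phi>\<in>F. \<exists>\<alpha>>0. \<forall>x\<in>X. \<forall>y\<in>X. Phi_r P p A g r x y \<phi> \<alpha> < c"
proof -
  define f where "f = (\<lambda>z (\<theta> :: ('w \<Rightarrow> real) \<times> real). Phi_r P p A g r (fst z) (snd z) (fst \<theta>) (snd \<theta>))"
  have "\<exists>\<theta>\<in>F \<times> {0<..}. \<forall>z\<in>X \<times> X. f z \<theta> < c"
  proof (rule concave_minimax)
    show "compact (X \<times> X)" "convex (X \<times> X)"
      using compact_Times[OF X_compact X_compact] convex_Times[OF X_convex X_convex] .
    show "continuous_on (X \<times> X) (\<lambda>z. f z \<theta>)" "concave_on (X \<times> X) (\<lambda>z. f z \<theta>)"
      if "\<theta> \<in> F \<times> {0<..}" for \<theta>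
      using that Phi_r_continuous[of "fst \<theta>"] Phi_r_concave[of "fst \<theta>" "snd \<theta>"]
      by (simp_all add: f_def mem_Times_iff)
    have "((\<lambda>_. 0), 1) \<in> F \<times> {0 :: real<..}" using F_const by simp
    then show "F \<times> {0 :: real<..} \<noteq> {}" by (metis equals0D)
    show "\<exists>\<theta>\<in>F \<times> {0<..}. \<forall>z\<in>X \<times> X. f z \<theta> \<le> (1 - t) * f z a + t * f z b"
      if "a \<in> F \<times> {0<..}" "b \<in> F \<times> {0<..}" "0 \<le> t" "t \<le> 1" for a b t
    proof -
      have a: "fst a \<in> F" "snd a > 0" and b: "fst b \<in> F" "snd b > 0" using that(1,2) by auto
      have "(1 - t) * snd a + t * snd b > 0"
        using a b that(3,4) by (cases "t = 0") (auto intro: add_nonneg_pos)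
      moreover have "(\<lambda>\<omega>. (1 - t) * fst a \<omega> + t * fst b \<omega>) \<in> F" using F_lin[OF a(1) b(1)] .
      moreover have "\<forall>z\<in>X \<times> X. f z ((\<lambda>\<omega>. (1 - t) * fst a \<omega> + t * fst b \<omega>), (1 - t) * snd a + t * snd b)
          \<le> (1 - t) * f z a + t * f z b"
        unfolding f_def using Phi_r_convex_parameter[OF a(1) b(1) a(2) b(2) that(3,4)] by auto
      ultimately show ?thesis
        by (intro bexI[of _ "((\<lambda>\<omega>. (1 - t) * fst a \<omega> + t * fst b \<omega>), (1 - t) * snd a + t * snd b)"]) auto
    qed
    show "\<exists>\<theta>\<in>F \<times> {0<..}. f z \<theta> < c" if z: "z \<in> X \<times> X" for z
    proof -
      obtain \<phi> \<alpha> where "\<phi> \<in> F" "\<alpha> > 0" "Phi_r P p A g r (fst z) (snd z) \<phi> \<alpha> < c"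
        using pointwise[of "fst z" "snd z"] z by (auto simp: mem_Times_iff)
      then show ?thesis by (intro bexI[of _ "(\<phi>, \<alpha>)"]) (auto simp: f_def)
    qed
  qed
  then show ?thesis by (force simp: f_def)
qed

lemma risk_star_lower_bound:
  assumes \<delta>: "0 < \<delta>" "\<delta> < 1" and r: "ln (1 / \<delta>) \<le> r"
  shows "ereal (ln (1 / \<delta>) / r) * Phi_star P p A X F g r \<le> risk_star P p A X g (\<delta>\<^sup>2 / 4)"
  unfolding risk_star_def risk_def
proof (intro INF_greatest Inf_greatest)
  fix ghat e
  assume ghat: "ghat \<in> borel_measurable P"
    and "e \<in> {ereal \<delta>0 |\<delta>0. (SUP x\<in>X. ereal (miss_prob P p A g ghat x \<delta>0)) < ereal (\<delta>\<^sup>2 / 4)}"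
  then obtain \<delta>0 where e: "e = ereal \<delta>0"
    and sup: "(SUP x\<in>X. ereal (miss_prob P p A g ghat x \<delta>0)) < ereal (\<delta>\<^sup>2 / 4)" by blast
  have accurate: "miss_prob P p A g ghat x \<delta>0 < \<delta>\<^sup>2 / 4" if "x \<in> X" for x
    using order.strict_trans1[OF SUP_upper[OF that] sup] by simp
  define l where "l = ln (1 / \<delta>) / r"
  have "0 < ln (1 / \<delta>)" using \<delta> by simp
  then have "0 < r" and l: "0 < l" "l \<le> 1" using r by (simp_all add: l_def)
  have "Phi_star P p A X F g r \<le> ereal ((2 * \<delta>0 / l) / 2)"
  proof (rule Phi_star_le, rule Phi_r_uniformly_small, rule Phi_r_pointwise_small)
    fix c x y
    assume c: "2 * \<delta>0 / l < c" and xy: "x \<in> X" "y \<in> X"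
      and close: "0 \<le> ln (affinity (A x) (A y)) + r"
    have "ln \<delta> = l * (- r)" using \<open>0 < r\<close> \<delta> by (simp add: l_def ln_div)
    also have "\<dots> \<le> l * ln (affinity (A x) (A y))" using close l by (intro mult_left_mono) auto
    finally have "l * (g \<bullet> x - g \<bullet> y) \<le> 2 * \<delta>0"
      using gap_bound_of_accurate_estimate[OF ghat xy l \<delta>(1) accurate] by blast
    also have "2 * \<delta>0 < l * c" using c l by (simp add: field_simps)
    finally show "g \<bullet> x - g \<bullet> y < c" using l by simp
  qed
  then show "ereal l * Phi_star P p A X F g r \<le> e"
    unfolding e using l by (cases "Phi_star P p A X F g r") (auto simp: field_simps)
qed

end

lemma two_sqrt_parameter:
  fixes \<epsilon> :: real
  assumes \<epsilon>: "0 < \<epsilon>" "\<epsilon> < 1 / 4"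
  defines "\<delta> \<equiv> 2 * sqrt \<epsilon>"
  shows "0 < \<delta>" "\<delta> < 1" "\<delta>\<^sup>2 / 4 = \<epsilon>" "ln (1 / \<delta>) \<le> ln (2 / \<epsilon>)"
    and "ln (1 / \<delta>) / ln (2 / \<epsilon>) = ln (1 / (4 * \<epsilon>)) / (2 * ln (2 / \<epsilon>))"
proof -
  have sqrt_pos: "0 < sqrt \<epsilon>" using \<epsilon> by simp
  have sqrt_sq: "sqrt \<epsilon> * sqrt \<epsilon> = \<epsilon>" using \<epsilon> by simp
  have "sqrt \<epsilon> < sqrt (1 / 4)" using \<epsilon> by (intro real_sqrt_less_mono)
  then have sqrt_lt_half: "sqrt \<epsilon> < 1 / 2" by (simp add: real_sqrt_divide)
  show \<delta>: "0 < \<delta>" "\<delta> < 1" using sqrt_pos sqrt_lt_half unfolding \<delta>_def by linarith+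
  show sq: "\<delta>\<^sup>2 / 4 = \<epsilon>" unfolding \<delta>_def power2_eq_square using sqrt_sq by simp
  have "sqrt \<epsilon> * sqrt \<epsilon> \<le> sqrt \<epsilon> * 4" using sqrt_pos sqrt_lt_half by (intro mult_left_mono) auto
  then have "\<epsilon> \<le> 2 * \<delta>" using sqrt_sq unfolding \<delta>_def by linarith
  with \<delta> have "2 / (2 * \<delta>) \<le> 2 / \<epsilon>" using \<epsilon> by (intro frac_le) auto
  then show "ln (1 / \<delta>) \<le> ln (2 / \<epsilon>)" using \<delta> \<epsilon> by simp
  have "ln (1 / (4 * \<epsilon>)) = ln ((1 / \<delta>)\<^sup>2)" using sq by (simp add: power_one_over mult.commute)
  also have "\<dots> = 2 * ln (1 / \<delta>)" by (simp add: ln_realpow)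
  finally show "ln (1 / \<delta>) / ln (2 / \<epsilon>) = ln (1 / (4 * \<epsilon>)) / (2 * ln (2 / \<epsilon>))" by simp
qed

theorem lemma3p2:
  fixes P :: "'w::polish_space measure"
    and M :: "(real^'m) set"
    and p :: "real^'m \<Rightarrow> 'w \<Rightarrow> real"
    and F :: "('w \<Rightarrow> real) set"
    and X :: "(real^'n) set"
    and A :: "real^'n \<Rightarrow> real^'m"
    and g :: "real^'n"
  assumes good: "good_pair P M p F"
    and X_ne: "X \<noteq> {}" and X_convex: "convex X" and X_compact: "compact X"
    and A_affine: "\<exists>L b. linear L \<and> A = (\<lambda>x. L x + b)"
    and AX: "A ` X \<subseteq> M"
  shows "(\<forall>\<delta>::real. 0 < \<delta> \<and> \<delta> < 1 \<longrightarrow>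
            risk_star P p A X g (\<delta>\<^sup>2 / 4) \<ge> Phi_star P p A X F g (ln (1 / \<delta>)))
       \<and> (\<forall>\<epsilon>::real. 0 < \<epsilon> \<and> \<epsilon> < 1/4 \<longrightarrow>
            risk_star P p A X g \<epsilon> \<ge>
              ereal (ln (1 / (4 * \<epsilon>)) / (2 * ln (2 / \<epsilon>))) * Phi_star P p A X F g (ln (2 / \<epsilon>)))"
proof -
  interpret estimation_problem P M p F X A g
    using good X_compact X_convex A_affine AX by unfold_locales
  show ?thesis
  proof (intro conjI allI impI)
    fix \<delta> :: real assume "0 < \<delta> \<and> \<delta> < 1"
    then show "Phi_star P p A X F g (ln (1 / \<delta>)) \<le> risk_star P p A X g (\<delta>\<^sup>2 / 4)"
      using risk_star_lower_bound[of \<delta> "ln (1 / \<delta>)"] by (simp add: one_ereal_def[symmetric])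
  next
    fix \<epsilon> :: real assume "0 < \<epsilon> \<and> \<epsilon> < 1 / 4"
    then show "ereal (ln (1 / (4 * \<epsilon>)) / (2 * ln (2 / \<epsilon>))) * Phi_star P p A X F g (ln (2 / \<epsilon>))
        \<le> risk_star P p A X g \<epsilon>"
      using risk_star_lower_bound[of "2 * sqrt \<epsilon>" "ln (2 / \<epsilon>)"] two_sqrt_parameter[of \<epsilon>] by simp
  qed
qed

end
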